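(* Let $f_c\ge1$ be an integer, $\mathbb{T}=\mathbb{R}/\mathbb{Z}$, $0<h<\frac{1}{2f_c}$ and $m_0=\delta_{h/2}-\delta_{-h/2}$. Then the problem $$\sup_{p\in\mathbb{R}^{2f_c+1}}\int_{\mathbb{T}}\Big(\sum_{k=0}^{2f_c}p_k\varphi_k(t)\Big)\mathrm{d}m_0(t)\quad\text{s.t.}\quad \sup_{t\in\mathbb{T}}\Big|\sum_{k=0}^{2f_c}p_k\varphi_k(t)\Big|\le1$$ has the unique solution $p_*=(0,\dots,0,1)$, i.e. the unique maximizing trigonometric polynomial is $\eta_*(t)=\sin(2\pi f_c t)$. Equivalently, among real trigonometric polynomials $\eta$ of degree at most $f_c$ with $\|\eta\|_\infty\le1$, $\eta(h/2)-\eta(-h/2)$ is maximized uniquely by $\eta_*$.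
   Context: The trigonometric system is $\varphi_0(t)=1$, $\varphi_{2j-1}(t)=\cos(2\pi jt)$, $\varphi_{2j}(t)=\sin(2\pi jt)$ for $1\le j\le f_c$. *)

theory Defs
  imports Complex_Main
begin

definition trig_phi :: "nat \<Rightarrow> real \<Rightarrow> real" where
  "trig_phi k t = (if k = 0 then 1
     else if odd k then cos (2 * pi * real ((k + 1) div 2) * t)
     else sin (2 * pi * real (k div 2) * t))"

definition trig_poly :: "nat \<Rightarrow> (nat \<Rightarrow> real) \<Rightarrow> real \<Rightarrow> real" where
  "trig_poly fc p t = (\<Sum>k\<le>2 * fc. p k * trig_phi k t)"

end

theory Submission
  imports Defs "HOL-Computational_Algebra.Polynomial" "HOL-Analysis.Complex_Transcendental"
begin

text \<open>
  Substituting \<open>\<theta> = 2\<pi>t\<close>, the objective becomes \<open>2 S(\<pi>h)\<close>, where \<open>S\<close> is the sine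
  (odd) part of the polynomial; \<open>|S| \<le> 1\<close> whenever the polynomial is bounded by 1.
  A sine polynomial of degree \<open>n\<close> is determined by its values at the \<open>n\<close> nodes
  \<open>x\<^sub>k = (2k+1)\<pi>/(2n)\<close> in \<open>(0,\<pi>)\<close>, so \<open>S(\<alpha>) = \<Sum>\<^sub>k S(x\<^sub>k) \<ell>\<^sub>k(\<alpha>)\<close> with the Lagrange basis
  \<open>\<ell>\<^sub>k\<close>. For \<open>0 < \<alpha> < \<pi>/(2n)\<close> the value \<open>\<ell>\<^sub>k(\<alpha>)\<close> has the sign \<open>(-1)\<^sup>k = sin(n x\<^sub>k)\<close>, hence
  \<open>S(\<alpha>) \<le> \<Sum>\<^sub>k |\<ell>\<^sub>k(\<alpha>)| = sin(n\<alpha>)\<close>, with equality only if \<open>S(x\<^sub>k) = (-1)\<^sup>k\<close> for all \<open>k\<close>, i.e.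
  \<open>S = sin(n\<cdot>)\<close>. Then the cosine part \<open>C\<close> satisfies \<open>|C(x\<^sub>k) \<plusminus> 1| \<le> 1\<close>, so it vanishes at
  the \<open>2n\<close> points \<open>\<plusminus>x\<^sub>k\<close>, where \<open>cos(n\<theta>)\<close> vanishes too; thus \<open>C = c cos(n\<theta>)\<close>, and
  \<open>c cos + sin\<close> is bounded by 1 only for \<open>c = 0\<close>.
\<close>

definition cos_sum :: "nat \<Rightarrow> (nat \<Rightarrow> real) \<Rightarrow> real \<Rightarrow> real" where
  "cos_sum N a \<theta> = (\<Sum>j\<le>N. a j * cos (real j * \<theta>))"

definition sin_sum :: "nat \<Rightarrow> (nat \<Rightarrow> real) \<Rightarrow> real \<Rightarrow> real" where
  "sin_sum N b \<theta> = (\<Sum>j\<le>N. b j * sin (real j * \<theta>))"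

lemma cos_sum_minus: "cos_sum N a (- \<theta>) = cos_sum N a \<theta>"
  unfolding cos_sum_def by simp

lemma sin_sum_minus: "sin_sum N b (- \<theta>) = - sin_sum N b \<theta>"
  unfolding sin_sum_def by (simp add: sum_negf)

lemma cos_sum_Suc: "cos_sum (Suc m) a \<theta> = cos_sum m a \<theta> + a (Suc m) * cos (real (Suc m) * \<theta>)"
  unfolding cos_sum_def by simp

text \<open>At \<open>z = cis \<theta>\<close> this polynomial is \<open>z\<^sup>N\<close> times the trigonometric sum, so a nonzero
  trigonometric sum of degree \<open>N\<close> has at most \<open>2N\<close> zeros in \<open>(-\<pi>, \<pi>]\<close>.\<close>

definition trig_sum_poly :: "nat \<Rightarrow> (nat \<Rightarrow> real) \<Rightarrow> (nat \<Rightarrow> real) \<Rightarrow> complex poly" where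
  "trig_sum_poly N a b =
     (\<Sum>j\<le>N. monom ((of_real (a j) - \<i> * of_real (b j)) / 2) (N + j)
            + monom ((of_real (a j) + \<i> * of_real (b j)) / 2) (N - j))"

lemma poly_trig_sum_poly:
  "poly (trig_sum_poly N a b) (cis \<theta>) = cis \<theta> ^ N * of_real (cos_sum N a \<theta> + sin_sum N b \<theta>)"
proof -
  have "(of_real (a j) - \<i> * of_real (b j)) / 2 * cis \<theta> ^ (N + j)
        + (of_real (a j) + \<i> * of_real (b j)) / 2 * cis \<theta> ^ (N - j)
      = cis \<theta> ^ N * of_real (a j * cos (real j * \<theta>) + b j * sin (real j * \<theta>))"
    (is "?lhs j = ?rhs j") if "j \<le> N" for j
  proof -
    have "cis \<theta> ^ (N + j) = cis \<theta> ^ N * cis (real j * \<theta>)"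
      by (simp only: power_add Complex.DeMoivre)
    moreover have "cis \<theta> ^ (N - j) = cis \<theta> ^ N * cis (- (real j * \<theta>))"
      using that by (simp add: Complex.DeMoivre cis_mult of_nat_diff algebra_simps)
    ultimately have "?lhs j = cis \<theta> ^ N * ((of_real (a j) - \<i> * of_real (b j)) / 2 * cis (real j * \<theta>)
        + (of_real (a j) + \<i> * of_real (b j)) / 2 * cis (- (real j * \<theta>)))"
      by (simp only:) (simp add: algebra_simps)
    also have "\<dots> = ?rhs j"
      by (simp add: complex_eq_iff algebra_simps add_divide_distrib[symmetric])
    finally show ?thesis .
  qed
  then show ?thesis
    by (simp add: trig_sum_poly_def poly_sum poly_monom cos_sum_def sin_sum_def
        sum_distrib_left sum.distrib[symmetric] distrib_left del: of_real_add of_real_mult)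
qed

lemma degree_trig_sum_poly: "degree (trig_sum_poly N a b) \<le> 2 * N"
  unfolding trig_sum_poly_def
  by (rule degree_sum_le) (auto intro!: degree_add_le order.trans[OF degree_monom_le])

lemma trig_sum_poly_eq_0D:
  assumes "trig_sum_poly N a b = 0" and "j \<le> N"
  shows "a j = 0" and "1 \<le> j \<Longrightarrow> b j = 0"
proof -
  define A where "A i = (of_real (a i) - \<i> * of_real (b i)) / (2 :: complex)" for i
  define B where "B i = (of_real (a i) + \<i> * of_real (b i)) / (2 :: complex)" for i
  have coeff: "coeff (trig_sum_poly N a b) m
      = (\<Sum>i\<le>N. (if N + i = m then A i else 0) + (if N - i = m then B i else 0))" for m
    unfolding trig_sum_poly_def A_def B_def by (simp add: coeff_sum coeff_monom)
  have "coeff (trig_sum_poly N a b) N = (\<Sum>i\<le>N. if i = 0 then A i + B i else 0)"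
    unfolding coeff by (rule sum.cong) auto
  then have "A 0 + B 0 = 0" using assms(1) by simp
  then have a0: "a 0 = 0" by (simp add: A_def B_def complex_eq_iff)
  have "A j = 0 \<and> B j = 0" if "1 \<le> j"
  proof -
    have "coeff (trig_sum_poly N a b) (N + j) = (\<Sum>i\<le>N. if i = j then A i else 0)"
      unfolding coeff using that by (intro sum.cong) auto
    moreover have "coeff (trig_sum_poly N a b) (N - j) = (\<Sum>i\<le>N. if i = j then B i else 0)"
      unfolding coeff using that assms(2) by (intro sum.cong) auto
    ultimately show ?thesis using assms by simp
  qed
  then have ab: "a j = 0 \<and> b j = 0" if "1 \<le> j"
    using that by (simp add: A_def B_def complex_eq_iff)
  show "a j = 0" using a0 ab by (cases j) auto
  show "1 \<le> j \<Longrightarrow> b j = 0" using ab by simp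
qed

lemma trig_sum_zeros_imp_coeffs_zero:
  assumes "finite Z" "Z \<subseteq> {-pi<..pi}" "card Z > 2 * N"
    and "\<And>\<theta>. \<theta> \<in> Z \<Longrightarrow> cos_sum N a \<theta> + sin_sum N b \<theta> = 0" and "j \<le> N"
  shows "a j = 0" and "1 \<le> j \<Longrightarrow> b j = 0"
proof -
  have "trig_sum_poly N a b = 0"
  proof (rule ccontr)
    assume nz: "trig_sum_poly N a b \<noteq> 0"
    have "inj_on cis Z"
      using assms(2) by (intro inj_on_inverseI[where g = Arg]) (auto simp: Arg_cis)
    then have "card Z = card (cis ` Z)" by (simp add: card_image)
    also have "\<dots> \<le> card {z. poly (trig_sum_poly N a b) z = 0}"
      using assms(4) by (intro card_mono poly_roots_finite[OF nz]) (auto simp: poly_trig_sum_poly)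
    also have "\<dots> \<le> 2 * N"
      using card_poly_roots_bound[OF nz] degree_trig_sum_poly[of N a b] by linarith
    finally show False using assms(3) by simp
  qed
  then show "a j = 0" and "1 \<le> j \<Longrightarrow> b j = 0"
    using trig_sum_poly_eq_0D assms(5) by blast+
qed

definition sine_poly :: "nat \<Rightarrow> (real \<Rightarrow> real) \<Rightarrow> bool" where
  "sine_poly N f \<longleftrightarrow> (\<exists>b. f = sin_sum N b)"

lemma sin_sum_delta:
  assumes "m \<le> N" shows "sin_sum N (\<lambda>j. if j = m then 1 else 0) \<theta> = sin (real m * \<theta>)"
proof -
  have "sin_sum N (\<lambda>j. if j = m then 1 else 0) \<theta> = (\<Sum>j\<le>N. if j = m then sin (real m * \<theta>) else 0)"
    unfolding sin_sum_def by (rule sum.cong) auto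
  then show ?thesis using assms by simp
qed

lemma sine_poly_sin: "m \<le> N \<Longrightarrow> sine_poly N (\<lambda>\<theta>. sin (real m * \<theta>))"
  unfolding sine_poly_def
  by (rule exI[of _ "\<lambda>j. if j = m then 1 else 0"]) (simp add: fun_eq_iff sin_sum_delta)

lemma sine_poly_add:
  assumes "sine_poly N f" "sine_poly N g" shows "sine_poly N (\<lambda>\<theta>. f \<theta> + g \<theta>)"
proof -
  obtain b c where "f = sin_sum N b" "g = sin_sum N c" using assms unfolding sine_poly_def by blast
  then have "(\<lambda>\<theta>. f \<theta> + g \<theta>) = sin_sum N (\<lambda>j. b j + c j)"
    by (simp add: fun_eq_iff sin_sum_def sum.distrib distrib_right)
  then show ?thesis unfolding sine_poly_def by blast
qed

lemma sine_poly_cmult: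
  assumes "sine_poly N f" shows "sine_poly N (\<lambda>\<theta>. c * f \<theta>)"
proof -
  obtain b where "f = sin_sum N b" using assms unfolding sine_poly_def by blast
  then have "(\<lambda>\<theta>. c * f \<theta>) = sin_sum N (\<lambda>j. c * b j)"
    by (simp add: fun_eq_iff sin_sum_def sum_distrib_left mult.assoc)
  then show ?thesis unfolding sine_poly_def by blast
qed

lemma sine_poly_diff: "sine_poly N f \<Longrightarrow> sine_poly N g \<Longrightarrow> sine_poly N (\<lambda>\<theta>. f \<theta> - g \<theta>)"
  using sine_poly_add[of N f "\<lambda>\<theta>. - 1 * g \<theta>"] sine_poly_cmult[of N g "- 1"] by simp

lemma sine_poly_sum:
  "finite I \<Longrightarrow> (\<And>i. i \<in> I \<Longrightarrow> sine_poly N (f i)) \<Longrightarrow> sine_poly N (\<lambda>\<theta>. \<Sum>i\<in>I. f i \<theta>)"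
proof (induction I rule: finite_induct)
  case empty
  have "(\<lambda>_. 0) = sin_sum N (\<lambda>_. 0)" by (simp add: fun_eq_iff sin_sum_def)
  then show ?case unfolding sine_poly_def by auto
qed (auto intro: sine_poly_add)

lemma sine_poly_Suc:
  assumes "sine_poly N f" shows "sine_poly (Suc N) f"
proof -
  obtain b where "f = sin_sum N b" using assms unfolding sine_poly_def by blast
  then have "f = sin_sum (Suc N) (\<lambda>j. if j \<le> N then b j else 0)"
    by (simp add: fun_eq_iff sin_sum_def)
  then show ?thesis unfolding sine_poly_def by blast
qed

lemma sine_poly_cos_mult:
  assumes "sine_poly N f" shows "sine_poly (Suc N) (\<lambda>\<theta>. cos \<theta> * f \<theta>)"
proof -
  obtain b where b: "f = sin_sum N b" using assms unfolding sine_poly_def by blast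
  have prod_to_sum: "cos \<theta> * sin (real j * \<theta>) = sin ((real j + 1) * \<theta>) / 2 + sin ((real j - 1) * \<theta>) / 2"
    for j \<theta>
    by (simp add: distrib_right left_diff_distrib sin_add sin_diff field_simps)
  have shifted: "sine_poly (Suc N) (\<lambda>\<theta>. sin ((real j + 1) * \<theta>) / 2 + sin ((real j - 1) * \<theta>) / 2)"
    if "j \<le> N" for j
  proof (cases j)
    case 0
    then show ?thesis
      using sine_poly_cmult[OF sine_poly_sin[of 1 "Suc N"], of 0] by simp
  next
    case (Suc i)
    have "real j + 1 = real (Suc j)" "real j - 1 = real i" using Suc by simp_all
    then show ?thesis using that Suc
      by (simp only:) (intro sine_poly_add sine_poly_cmult[where c = "1/2", simplified] sine_poly_sin; simp)
  qed
  have "(\<lambda>\<theta>. cos \<theta> * f \<theta>) = (\<lambda>\<theta>. \<Sum>j\<le>N. b j * (sin ((real j + 1) * \<theta>) / 2 + sin ((real j - 1) * \<theta>) / 2))"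
    unfolding b sin_sum_def sum_distrib_left
    by (intro ext sum.cong refl) (metis prod_to_sum mult.left_commute)
  then show ?thesis
    using shifted by (auto intro!: sine_poly_sum sine_poly_cmult)
qed

lemma sine_poly_sin_mult_prod:
  "finite J \<Longrightarrow> sine_poly (Suc (card J)) (\<lambda>\<theta>. sin \<theta> * (\<Prod>j\<in>J. cos \<theta> - c j))"
proof (induction J rule: finite_induct)
  case empty
  show ?case using sine_poly_sin[of 1 1] by simp
next
  case (insert x J)
  have "sine_poly (Suc (Suc (card J)))
      (\<lambda>\<theta>. cos \<theta> * (sin \<theta> * (\<Prod>j\<in>J. cos \<theta> - c j)) - c x * (sin \<theta> * (\<Prod>j\<in>J. cos \<theta> - c j)))"
    by (rule sine_poly_diff[OF sine_poly_cos_mult sine_poly_cmult[OF sine_poly_Suc]]) (fact insert.IH)+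
  then show ?case using insert by (simp add: algebra_simps)
qed

lemma sine_poly_odd: "sine_poly N f \<Longrightarrow> f (- \<theta>) = - f \<theta>"
  unfolding sine_poly_def by (auto simp: sin_sum_minus)

lemma card_Un_uminus_image:
  fixes Z :: "real set"
  assumes "finite Z" "Z \<subseteq> {0<..}"
  shows "card (Z \<union> uminus ` Z) = 2 * card Z"
proof -
  have "Z \<inter> uminus ` Z = {}" using assms(2) by (auto simp: subset_iff) (metis neg_0_less_iff_less not_less_iff_gr_or_eq)
  moreover have "card (uminus ` Z) = card Z" by (rule card_image) (simp add: inj_on_def)
  ultimately show ?thesis using assms(1) by (simp add: card_Un_disjoint)
qed

lemma sine_poly_zeros:
  assumes "sine_poly N f" "finite Z" "Z \<subseteq> {0<..<pi}" "card Z \<ge> N" "\<And>\<theta>. \<theta> \<in> Z \<Longrightarrow> f \<theta> = 0"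
  shows "f \<theta> = 0"
proof -
  obtain b where b: "f = sin_sum N b" using assms(1) unfolding sine_poly_def by blast
  define Z' where "Z' = insert 0 (Z \<union> uminus ` Z)"
  have "0 \<notin> Z \<union> uminus ` Z" using assms(3) by force
  moreover have "Z \<subseteq> {0<..}" using assms(3) by auto
  ultimately have "card Z' = 2 * card Z + 1"
    using assms(2) card_Un_uminus_image[of Z] by (simp add: Z'_def)
  moreover have "Z' \<subseteq> {-pi<..pi}" using assms(3) by (auto simp: Z'_def)
  moreover have "f x = 0" if "x \<in> Z'" for x
    using that assms(5) sine_poly_odd[OF assms(1), of 0] sine_poly_odd[OF assms(1)]
    by (auto simp: Z'_def)
  ultimately have "b j = 0" if "1 \<le> j" "j \<le> N" for j
    using trig_sum_zeros_imp_coeffs_zero(2)[of Z' N "\<lambda>_. 0" b j] assms(2,4) that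
    by (simp add: Z'_def b cos_sum_def)
  then have "b j * sin (real j * \<theta>) = 0" if "j \<le> N" for j
    using that by (cases j) auto
  then show ?thesis unfolding b sin_sum_def by (simp add: sum.neutral)
qed

definition node :: "nat \<Rightarrow> nat \<Rightarrow> real" where
  "node n k = (2 * real k + 1) * pi / (2 * real n)"

lemma node_ge: "n \<ge> 1 \<Longrightarrow> pi / (2 * real n) \<le> node n k"
  unfolding node_def by (intro divide_right_mono) auto

lemma node_pos: "n \<ge> 1 \<Longrightarrow> 0 < node n k"
  unfolding node_def by simp

lemma node_less_pi:
  assumes "k < n" shows "node n k < pi"
proof -
  have "(2 * real k + 1) * pi < 2 * real n * pi" using assms by simp
  then show ?thesis unfolding node_def using assms by (simp add: divide_less_eq)
qed

lemma node_strict_mono: "n \<ge> 1 \<Longrightarrow> j < k \<Longrightarrow> node n j < node n k"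
  unfolding node_def by (intro divide_strict_right_mono mult_strict_right_mono) auto

lemma cos_node_strict_antimono: "n \<ge> 1 \<Longrightarrow> j < k \<Longrightarrow> k < n \<Longrightarrow> cos (node n k) < cos (node n j)"
  by (rule cos_monotone_0_pi) (use node_pos[of n j] node_strict_mono[of n j k] node_less_pi[of k n] in auto)

lemma sin_mult_node: "n \<ge> 1 \<Longrightarrow> sin (real n * node n k) = (-1) ^ k"
  and cos_mult_node: "n \<ge> 1 \<Longrightarrow> cos (real n * node n k) = 0"
proof -
  assume "n \<ge> 1"
  then have "real n * node n k = real k * pi + pi / 2" unfolding node_def by (simp add: field_simps)
  then show "sin (real n * node n k) = (-1) ^ k" "cos (real n * node n k) = 0"
    by (simp_all add: sin_add cos_add)
qed

lemma card_nodes: "n \<ge> 1 \<Longrightarrow> card (node n ` {..<n}) = n"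
  by (subst card_image) (auto intro!: strict_mono_on_imp_inj_on simp: strict_mono_on_def node_strict_mono)

lemma nodes_subset: "n \<ge> 1 \<Longrightarrow> node n ` {..<n} \<subseteq> {0<..<pi}"
  using node_pos node_less_pi by auto

lemma sine_poly_vanishing_at_nodes:
  assumes "n \<ge> 1" "sine_poly n f" "\<And>k. k < n \<Longrightarrow> f (node n k) = 0"
  shows "f \<theta> = 0"
proof (rule sine_poly_zeros[OF assms(2)])
  show "finite (node n ` {..<n})" by simp
  show "node n ` {..<n} \<subseteq> {0<..<pi}" by (rule nodes_subset[OF assms(1)])
  show "n \<le> card (node n ` {..<n})" using card_nodes[OF assms(1)] by simp
qed (use assms(3) in auto)

text \<open>The unnormalised Lagrange basis for sine polynomials of degree \<open>n\<close> at the nodes.\<close>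

definition node_poly :: "nat \<Rightarrow> nat \<Rightarrow> real \<Rightarrow> real" where
  "node_poly n k \<theta> = sin \<theta> * (\<Prod>j\<in>{..<n} - {k}. cos \<theta> - cos (node n j))"

lemma sine_poly_node_poly: "k < n \<Longrightarrow> sine_poly n (node_poly n k)"
  using sine_poly_sin_mult_prod[of "{..<n} - {k}" "\<lambda>j. cos (node n j)"]
  unfolding node_poly_def[abs_def] by simp

lemma node_poly_other_node: "m < n \<Longrightarrow> m \<noteq> k \<Longrightarrow> node_poly n k (node n m) = 0"
  unfolding node_poly_def by (subst prod_zero) auto

lemma node_poly_sign:
  assumes "n \<ge> 1" "k < n" shows "0 < (-1) ^ k * node_poly n k (node n k)"
proof -
  let ?c = "\<lambda>j. cos (node n j)"
  have split: "{..<n} - {k} = {..<k} \<union> {k<..<n}" using assms by auto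
  have left: "(\<Prod>j<k. ?c k - ?c j) = (-1) ^ k * (\<Prod>j<k. ?c j - ?c k)"
  proof -
    have "(\<Prod>j<k. ?c k - ?c j) = (\<Prod>j<k. (-1) * (?c j - ?c k))" by simp
    also have "\<dots> = (-1) ^ k * (\<Prod>j<k. ?c j - ?c k)"
      by (simp only: prod.distrib prod_constant card_lessThan)
    finally show ?thesis .
  qed
  have L: "(\<Prod>j<k. ?c j - ?c k) > 0" and R: "(\<Prod>j\<in>{k<..<n}. ?c k - ?c j) > 0"
    using cos_node_strict_antimono[OF assms(1)] assms(2) by (auto intro!: prod_pos)
  have S: "sin (node n k) > 0"
    using node_pos[OF assms(1)] node_less_pi[OF assms(2)] by (intro sin_gt_zero)
  have "node_poly n k (node n k)
      = sin (node n k) * ((\<Prod>j<k. ?c k - ?c j) * (\<Prod>j\<in>{k<..<n}. ?c k - ?c j))"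
    unfolding node_poly_def split by (subst prod.union_disjoint) auto
  then have "(-1) ^ k * node_poly n k (node n k)
      = ((-1) ^ k * (-1) ^ k) * (sin (node n k) * ((\<Prod>j<k. ?c j - ?c k) * (\<Prod>j\<in>{k<..<n}. ?c k - ?c j)))"
    unfolding left by (simp only: mult_ac)
  also have "\<dots> = sin (node n k) * ((\<Prod>j<k. ?c j - ?c k) * (\<Prod>j\<in>{k<..<n}. ?c k - ?c j))"
    by (simp flip: power_add)
  finally show ?thesis using L R S by simp
qed

lemma node_poly_pos:
  assumes "n \<ge> 1" "k < n" "0 < \<alpha>" "\<alpha> < pi / (2 * real n)" shows "0 < node_poly n k \<alpha>"
proof -
  have below: "\<alpha> < node n j" for j using assms(4) node_ge[OF assms(1), of j] by linarith
  then have "cos (node n j) < cos \<alpha>" if "j < n" for j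
    using that assms(3) node_less_pi[OF that] by (intro cos_monotone_0_pi) (auto intro: less_imp_le)
  moreover have "sin \<alpha> > 0"
    using assms(3) below[of k] node_less_pi[OF assms(2)] by (intro sin_gt_zero) auto
  ultimately show ?thesis unfolding node_poly_def by (intro mult_pos_pos prod_pos) auto
qed

definition node_basis :: "nat \<Rightarrow> nat \<Rightarrow> real \<Rightarrow> real" where
  "node_basis n k \<theta> = node_poly n k \<theta> / node_poly n k (node n k)"

lemma sine_poly_node_basis: "k < n \<Longrightarrow> sine_poly n (node_basis n k)"
  using sine_poly_cmult[OF sine_poly_node_poly, of k n "1 / node_poly n k (node n k)"]
  unfolding node_basis_def[abs_def] by simp

lemma node_basis_node:
  assumes "n \<ge> 1" "k < n" "m < n" shows "node_basis n k (node n m) = (if m = k then 1 else 0)"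
proof (cases "m = k")
  case True
  have "node_poly n k (node n k) \<noteq> 0"
    using node_poly_sign[OF assms(1,2)] by (metis less_irrefl mult_zero_right)
  then show ?thesis using True by (simp add: node_basis_def)
next
  case False
  then show ?thesis using node_poly_other_node[OF assms(3) False] by (simp add: node_basis_def)
qed

lemma sine_poly_interpolation:
  assumes "n \<ge> 1" "sine_poly n f"
  shows "f \<theta> = (\<Sum>k<n. f (node n k) * node_basis n k \<theta>)"
proof -
  define g where "g \<theta> = f \<theta> - (\<Sum>k<n. f (node n k) * node_basis n k \<theta>)" for \<theta>
  have "sine_poly n g"
    unfolding g_def by (rule sine_poly_diff[OF assms(2) sine_poly_sum]) (auto intro: sine_poly_cmult sine_poly_node_basis)
  moreover have "g (node n m) = 0" if "m < n" for m
  proof -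
    have "(\<Sum>k<n. f (node n k) * node_basis n k (node n m)) = (\<Sum>k<n. if k = m then f (node n m) else 0)"
      using node_basis_node[OF assms(1) _ that] by (intro sum.cong) auto
    then show ?thesis unfolding g_def using that by simp
  qed
  ultimately have "g \<theta> = 0" by (rule sine_poly_vanishing_at_nodes[OF assms(1)])
  then show ?thesis unfolding g_def by simp
qed

lemma node_basis_sign:
  assumes "n \<ge> 1" "k < n" "0 < \<alpha>" "\<alpha> < pi / (2 * real n)"
  shows "0 < (-1) ^ k * node_basis n k \<alpha>"
proof -
  have "(-1) ^ k * node_basis n k \<alpha> = node_poly n k \<alpha> / ((-1) ^ k * node_poly n k (node n k))"
    unfolding node_basis_def by (cases "even k") simp_all
  then show ?thesis using node_poly_pos[OF assms] node_poly_sign[OF assms(1,2)] by simp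
qed

lemma sin_mult_minus_sine_poly:
  assumes "n \<ge> 1" "sine_poly n f"
  shows "sin (real n * \<alpha>) - f \<alpha>
    = (\<Sum>k<n. (1 - (-1) ^ k * f (node n k)) * ((-1) ^ k * node_basis n k \<alpha>))"
proof -
  have "sin (real n * \<alpha>) = (\<Sum>k<n. (-1) ^ k * node_basis n k \<alpha>)"
    using sine_poly_interpolation[OF assms(1) sine_poly_sin[OF order.refl], of \<alpha>]
    by (simp add: sin_mult_node[OF assms(1)])
  moreover have "f \<alpha> = (\<Sum>k<n. f (node n k) * node_basis n k \<alpha>)"
    by (rule sine_poly_interpolation[OF assms])
  moreover have "(-1) ^ k * w - x * w = (1 - (-1) ^ k * x) * ((-1) ^ k * w)" for k and x w :: real
  proof -
    have "(1 - (-1) ^ k * x) * ((-1) ^ k * w) = (-1) ^ k * w - ((-1) ^ k * (-1) ^ k) * (x * w)"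
      by (simp add: algebra_simps)
    also have "(-1::real) ^ k * (-1) ^ k = 1" by (simp flip: power_add)
    finally show ?thesis by simp
  qed
  ultimately show ?thesis by (simp add: sum_subtractf[symmetric])
qed

lemma bounded_sine_poly_node_terms:
  assumes "n \<ge> 1" "0 < \<alpha>" "\<alpha> < pi / (2 * real n)" "sine_poly n f" "\<And>\<theta>. \<bar>f \<theta>\<bar> \<le> 1"
  defines "D \<equiv> \<lambda>k. (1 - (-1) ^ k * f (node n k)) * ((-1) ^ k * node_basis n k \<alpha>)"
  shows "sin (real n * \<alpha>) - f \<alpha> = (\<Sum>k<n. D k)"
    and "k < n \<Longrightarrow> 0 \<le> D k"
    and "k < n \<Longrightarrow> D k = 0 \<Longrightarrow> f (node n k) = (-1) ^ k"
proof -
  show "sin (real n * \<alpha>) - f \<alpha> = (\<Sum>k<n. D k)"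
    unfolding D_def by (rule sin_mult_minus_sine_poly[OF assms(1,4)])
  assume k: "k < n"
  have "\<bar>(-1) ^ k * f (node n k)\<bar> \<le> 1" using assms(5) by (simp add: abs_mult)
  then show "0 \<le> D k"
    unfolding D_def using node_basis_sign[OF assms(1) k assms(2,3)] by simp
  assume "D k = 0"
  then have "(-1) ^ k * f (node n k) = 1"
    unfolding D_def using node_basis_sign[OF assms(1) k assms(2,3)] by (metis less_irrefl mult_eq_0_iff right_minus_eq)
  moreover have "(-1) ^ k * ((-1) ^ k * f (node n k)) = f (node n k)"
    by (simp flip: mult.assoc power_add)
  ultimately show "f (node n k) = (-1) ^ k" by simp
qed

lemma sine_poly_le_sin_mult:
  assumes "n \<ge> 1" "0 < \<alpha>" "\<alpha> < pi / (2 * real n)" "sine_poly n f" "\<And>\<theta>. \<bar>f \<theta>\<bar> \<le> 1"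
  shows "f \<alpha> \<le> sin (real n * \<alpha>)"
proof -
  have "0 \<le> sin (real n * \<alpha>) - f \<alpha>"
    unfolding bounded_sine_poly_node_terms(1)[OF assms]
    by (rule sum_nonneg) (use bounded_sine_poly_node_terms(2)[OF assms] in simp)
  then show ?thesis by simp
qed

lemma sine_poly_eq_sin_mult:
  assumes "n \<ge> 1" "0 < \<alpha>" "\<alpha> < pi / (2 * real n)" "sine_poly n f" "\<And>\<theta>. \<bar>f \<theta>\<bar> \<le> 1"
    and "f \<alpha> = sin (real n * \<alpha>)"
  shows "f \<theta> = sin (real n * \<theta>)"
proof -
  define D where "D k = (1 - (-1) ^ k * f (node n k)) * ((-1) ^ k * node_basis n k \<alpha>)" for k
  note terms = bounded_sine_poly_node_terms[OF assms(1-5), folded D_def]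
  have "(\<Sum>k<n. D k) = 0" using terms(1) assms(6) by simp
  then have D0: "D k = 0" if "k < n" for k
    using sum_nonneg_eq_0_iff[of "{..<n}" D] terms(2) that by simp
  have "sine_poly n (\<lambda>\<theta>. f \<theta> - sin (real n * \<theta>))"
    by (rule sine_poly_diff[OF assms(4) sine_poly_sin[OF order.refl]])
  moreover have "f (node n k) - sin (real n * node n k) = 0" if "k < n" for k
    using terms(3)[OF that D0[OF that]] by (simp add: sin_mult_node[OF assms(1)])
  ultimately have "f \<theta> - sin (real n * \<theta>) = 0" by (rule sine_poly_vanishing_at_nodes[OF assms(1)])
  then show ?thesis by simp
qed

lemma trig_sum_identically_zero_imp_coeffs_zero:
  assumes "\<And>\<theta>. cos_sum N a \<theta> + sin_sum N b \<theta> = 0" "j \<le> N"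
  shows "a j = 0" and "1 \<le> j \<Longrightarrow> b j = 0"
proof -
  define Z where "Z = (\<lambda>k. real k * pi / real (2 * N + 1)) ` {..2 * N}"
  have "inj_on (\<lambda>k. real k * pi / real (2 * N + 1)) {..2 * N}"
    by (rule inj_onI) (simp add: field_simps)
  then have "card Z = 2 * N + 1" by (simp add: Z_def card_image)
  moreover have "real k * pi / real (2 * N + 1) \<in> {-pi<..pi}" if "k \<le> 2 * N" for k
  proof -
    have "real k * pi \<le> real (2 * N + 1) * pi" using that by (intro mult_right_mono) auto
    then show ?thesis by (simp add: divide_le_eq order.strict_trans2[OF _ divide_nonneg_nonneg])
  qed
  then have "Z \<subseteq> {-pi<..pi}" by (auto simp: Z_def)
  ultimately show "a j = 0" and "1 \<le> j \<Longrightarrow> b j = 0"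
    using trig_sum_zeros_imp_coeffs_zero[of Z N a b j] assms by (simp_all add: Z_def)
qed

lemma bounded_trig_sum_sin_part:
  assumes "\<And>\<theta>. \<bar>cos_sum N a \<theta> + sin_sum N b \<theta>\<bar> \<le> 1"
  shows "\<bar>sin_sum N b \<theta>\<bar> \<le> 1"
  using assms[of \<theta>] assms[of "- \<theta>"] by (simp add: cos_sum_minus sin_sum_minus)

lemma bounded_cmult_cos_plus_sin:
  fixes c :: real
  assumes "\<And>\<phi>. \<bar>c * cos \<phi> + sin \<phi>\<bar> \<le> 1" shows "c = 0"
proof (rule ccontr)
  assume "c \<noteq> 0"
  define r where "r = sqrt (1 + c\<^sup>2)"
  have r: "r > 1" "r\<^sup>2 = 1 + c\<^sup>2" using \<open>c \<noteq> 0\<close> by (simp_all add: r_def real_less_rsqrt)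
  moreover have "1 + c\<^sup>2 > 0" by (simp add: add_pos_nonneg)
  ultimately have "(c / r)\<^sup>2 + (1 / r)\<^sup>2 = 1" by (simp add: power_divide field_simps)
  then obtain \<phi> where \<phi>: "cos \<phi> = c / r" "sin \<phi> = 1 / r" by (metis sincos_total_2pi)
  have "c * cos \<phi> + sin \<phi> = r"
    using r by (simp add: \<phi> power2_eq_square field_simps)
  then show False using assms[of \<phi>] r(1) by simp
qed

lemma cos_sum_vanishes_at_nodes:
  assumes "n \<ge> 1" "\<And>\<theta>. \<bar>cos_sum n a \<theta> + sin (real n * \<theta>)\<bar> \<le> 1" "k < n"
  shows "cos_sum n a (node n k) = 0"
proof -
  have "\<bar>cos_sum n a (node n k) + (-1) ^ k\<bar> \<le> 1" "\<bar>cos_sum n a (node n k) - (-1) ^ k\<bar> \<le> 1"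
    using assms(2)[of "node n k"] assms(2)[of "- node n k"]
    by (simp_all add: cos_sum_minus sin_mult_node[OF assms(1)])
  then show ?thesis by (cases "even k") simp_all
qed

lemma cos_sum_zero_of_bounded_plus_sin:
  assumes "n \<ge> 1" "\<And>\<theta>. \<bar>cos_sum n a \<theta> + sin (real n * \<theta>)\<bar> \<le> 1" "j \<le> n"
  shows "a j = 0"
proof -
  obtain m where m: "n = Suc m" using assms(1) by (cases n) auto
  define X where "X = node n ` {..<n}"
  have X: "finite X" "X \<subseteq> {0<..<pi}" "card X = n"
    using nodes_subset[OF assms(1)] card_nodes[OF assms(1)] by (simp_all add: X_def)
  have "cos_sum m a \<theta> = 0" if "\<theta> \<in> X \<union> uminus ` X" for \<theta>
    using that cos_sum_vanishes_at_nodes[OF assms(1,2)] cos_mult_node[OF assms(1)]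
    by (auto simp: X_def m cos_sum_Suc cos_sum_minus)
  moreover have "card (X \<union> uminus ` X) = 2 * n"
    using X by (intro card_Un_uminus_image[of X, simplified X(3)]) auto
  moreover have "X \<union> uminus ` X \<subseteq> {-pi<..pi}" using X(2) by auto
  ultimately have low: "a i = 0" if "i \<le> m" for i
    using trig_sum_zeros_imp_coeffs_zero(1)[of "X \<union> uminus ` X" m a "\<lambda>_. 0" i] X(1) that m
    by (simp add: sin_sum_def)
  then have top: "cos_sum n a \<theta> = a n * cos (real n * \<theta>)" for \<theta>
    by (simp add: m cos_sum_Suc cos_sum_def)
  have "\<bar>a n * cos \<phi> + sin \<phi>\<bar> \<le> 1" for \<phi>
    using assms(2)[of "\<phi> / real n"] top[of "\<phi> / real n"] assms(1) by simp
  then have "a n = 0" by (rule bounded_cmult_cos_plus_sin)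
  then show ?thesis using low assms(3) m by (cases "j = n") auto
qed

definition trig_cos_coeff :: "(nat \<Rightarrow> real) \<Rightarrow> nat \<Rightarrow> real" where
  "trig_cos_coeff p j = (if j = 0 then p 0 else p (2 * j - 1))"

definition trig_sin_coeff :: "(nat \<Rightarrow> real) \<Rightarrow> nat \<Rightarrow> real" where
  "trig_sin_coeff p j = (if j = 0 then 0 else p (2 * j))"

lemma sum_atMost_double: "(\<Sum>k\<le>2 * N. f k) = f 0 + (\<Sum>j<N. f (2 * j + 1) + f (2 * j + 2))"
  for f :: "nat \<Rightarrow> 'a::comm_monoid_add"
  by (induction N) (simp_all add: atMost_Suc ac_simps)

lemma trig_poly_eq_cos_sum_sin_sum:
  "trig_poly N p t = cos_sum N (trig_cos_coeff p) (2 * pi * t) + sin_sum N (trig_sin_coeff p) (2 * pi * t)"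
proof -
  have "trig_poly N p t = p 0 + (\<Sum>j<N. p (2 * j + 1) * trig_phi (2 * j + 1) t + p (2 * j + 2) * trig_phi (2 * j + 2) t)"
    unfolding trig_poly_def by (subst sum_atMost_double) (simp add: trig_phi_def)
  also have "\<dots> = trig_cos_coeff p 0 + (\<Sum>j<N. trig_cos_coeff p (Suc j) * cos (real (Suc j) * (2 * pi * t))
      + trig_sin_coeff p (Suc j) * sin (real (Suc j) * (2 * pi * t)))"
    unfolding trig_cos_coeff_def trig_sin_coeff_def trig_phi_def
    by (intro arg_cong2[where f = "(+)"] sum.cong refl) (simp_all add: algebra_simps)
  also have "\<dots> = cos_sum N (trig_cos_coeff p) (2 * pi * t) + sin_sum N (trig_sin_coeff p) (2 * pi * t)"
    unfolding cos_sum_def sin_sum_def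
    by (simp add: sum.atMost_shift sum.distrib trig_sin_coeff_def)
  finally show ?thesis .
qed

lemma trig_poly_abs_le_1_iff:
  "(\<forall>t. \<bar>trig_poly N p t\<bar> \<le> 1) \<longleftrightarrow>
   (\<forall>\<theta>. \<bar>cos_sum N (trig_cos_coeff p) \<theta> + sin_sum N (trig_sin_coeff p) \<theta>\<bar> \<le> 1)"
proof (intro iffI allI)
  fix \<theta> assume "\<forall>t. \<bar>trig_poly N p t\<bar> \<le> 1"
  then have "\<bar>trig_poly N p (\<theta> / (2 * pi))\<bar> \<le> 1" by blast
  then show "\<bar>cos_sum N (trig_cos_coeff p) \<theta> + sin_sum N (trig_sin_coeff p) \<theta>\<bar> \<le> 1"
    by (simp add: trig_poly_eq_cos_sum_sin_sum)
qed (simp add: trig_poly_eq_cos_sum_sin_sum)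

lemma trig_poly_symmetric_diff:
  "trig_poly N p (h / 2) - trig_poly N p (- h / 2) = 2 * sin_sum N (trig_sin_coeff p) (pi * h)"
  using cos_sum_minus[of N "trig_cos_coeff p" "pi * h"] sin_sum_minus[of N "trig_sin_coeff p" "pi * h"]
  by (simp add: trig_poly_eq_cos_sum_sin_sum)

lemma eq_top_sine_coeffs:
  assumes "N \<ge> 1" and "\<forall>k > 2 * N. p k = 0" "\<forall>j\<le>N. trig_cos_coeff p j = 0"
    and "\<forall>j. 1 \<le> j \<and> j \<le> N \<longrightarrow> trig_sin_coeff p j = (if j = N then 1 else 0)"
  shows "p = (\<lambda>k. if k = 2 * N then 1 else 0)"
proof
  fix k :: nat
  define j where "j = (k + 1) div 2"
  show "p k = (if k = 2 * N then 1 else 0)"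
  proof (cases "k = 0 \<or> k > 2 * N")
    case True
    then show ?thesis using assms(1-3) unfolding trig_cos_coeff_def by auto
  next
    case False
    then have j: "1 \<le> j" "j \<le> N" unfolding j_def by presburger+
    show ?thesis
    proof (cases "even k")
      case True
      then have "k = 2 * j" unfolding j_def by presburger
      then show ?thesis using assms(4) j unfolding trig_sin_coeff_def by auto
    next
      case False
      then have "k = 2 * j - 1" unfolding j_def by presburger
      then show ?thesis using assms(3) j unfolding trig_cos_coeff_def by auto
    qed
  qed
qed

lemma bounded_trig_sum_sin_sum_le:
  assumes "n \<ge> 1" "0 < \<alpha>" "\<alpha> < pi / (2 * real n)"
    and "\<And>\<theta>. \<bar>cos_sum n a \<theta> + sin_sum n b \<theta>\<bar> \<le> 1"
  shows "sin_sum n b \<alpha> \<le> sin (real n * \<alpha>)"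
  by (rule sine_poly_le_sin_mult[of n \<alpha> "sin_sum n b"])
    (use assms bounded_trig_sum_sin_part[OF assms(4)] in \<open>auto simp: sine_poly_def\<close>)

lemma bounded_trig_sum_sin_sum_eq:
  assumes "n \<ge> 1" "0 < \<alpha>" "\<alpha> < pi / (2 * real n)"
    and "\<And>\<theta>. \<bar>cos_sum n a \<theta> + sin_sum n b \<theta>\<bar> \<le> 1"
    and "sin_sum n b \<alpha> = sin (real n * \<alpha>)" and "j \<le> n"
  shows "a j = 0" and "1 \<le> j \<Longrightarrow> b j = (if j = n then 1 else 0)"
proof -
  have sin_part: "sin_sum n b \<theta> = sin (real n * \<theta>)" for \<theta>
    by (rule sine_poly_eq_sin_mult[of n \<alpha> "sin_sum n b"])
      (use assms bounded_trig_sum_sin_part[OF assms(4)] in \<open>auto simp: sine_poly_def\<close>)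
  then show "a j = 0"
    using cos_sum_zero_of_bounded_plus_sin[OF assms(1) _ assms(6)] assms(4) by metis
  have "cos_sum n (\<lambda>_. 0) \<theta> + sin_sum n (\<lambda>j. b j - (if j = n then 1 else 0)) \<theta> = 0" for \<theta>
    using sin_part[of \<theta>] sin_sum_delta[of n n \<theta>]
    by (simp add: cos_sum_def sin_sum_def sum_subtractf left_diff_distrib)
  then show "1 \<le> j \<Longrightarrow> b j = (if j = n then 1 else 0)"
    using trig_sum_identically_zero_imp_coeffs_zero(2)[OF _ assms(6)] by fastforce
qed

lemma trig_coeffs_top_sine:
  assumes "N \<ge> 1"
  shows "trig_cos_coeff (\<lambda>k. if k = 2 * N then 1 else 0) = (\<lambda>_. 0)"
    and "trig_sin_coeff (\<lambda>k. if k = 2 * N then 1 else 0) = (\<lambda>j. if j = N then 1 else 0)"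
  using assms by (auto simp: fun_eq_iff trig_cos_coeff_def trig_sin_coeff_def) presburger

lemma extremal_trig_coeffs_eq_top_sine:
  assumes "N \<ge> 1" "0 < \<alpha>" "\<alpha> < pi / (2 * real N)" "\<forall>k > 2 * N. p k = 0"
    and "\<And>\<theta>. \<bar>cos_sum N (trig_cos_coeff p) \<theta> + sin_sum N (trig_sin_coeff p) \<theta>\<bar> \<le> 1"
    and "sin_sum N (trig_sin_coeff p) \<alpha> = sin (real N * \<alpha>)"
  shows "p = (\<lambda>k. if k = 2 * N then 1 else 0)"
  using bounded_trig_sum_sin_sum_eq[OF assms(1-3,5,6)]
  by (intro eq_top_sine_coeffs assms(1,4) allI impI) simp_all

theorem mainTheorem8:
  fixes fc :: nat and h :: real
    and feasible :: "(nat \<Rightarrow> real) \<Rightarrow> bool" and obj :: "(nat \<Rightarrow> real) \<Rightarrow> real"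
  assumes "fc \<ge> 1" and "0 < h" and "h < 1 / (2 * real fc)"
  defines "feasible \<equiv> \<lambda>p. (\<forall>k > 2 * fc. p k = 0) \<and> (\<forall>t::real. \<bar>trig_poly fc p t\<bar> \<le> 1)"
  defines "obj \<equiv> \<lambda>p. trig_poly fc p (h / 2) - trig_poly fc p (- h / 2)"
  shows "{p. feasible p \<and> (\<forall>q. feasible q \<longrightarrow> obj q \<le> obj p)} = {\<lambda>k. if k = 2 * fc then 1 else 0}"
proof -
  define p_top :: "nat \<Rightarrow> real" where "p_top = (\<lambda>k. if k = 2 * fc then 1 else 0)"
  define \<alpha> where "\<alpha> = pi * h"
  have \<alpha>: "0 < \<alpha>" "\<alpha> < pi / (2 * real fc)"
    using assms(2) mult_strict_left_mono[OF assms(3) pi_gt_zero] by (simp_all add: \<alpha>_def)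
  have obj_eq: "obj p = 2 * sin_sum fc (trig_sin_coeff p) \<alpha>" for p
    using trig_poly_symmetric_diff[of fc p h] by (simp add: obj_def \<alpha>_def)
  have feasible_iff: "feasible p \<longleftrightarrow> (\<forall>k > 2 * fc. p k = 0) \<and>
      (\<forall>\<theta>. \<bar>cos_sum fc (trig_cos_coeff p) \<theta> + sin_sum fc (trig_sin_coeff p) \<theta>\<bar> \<le> 1)" for p
    by (simp add: feasible_def trig_poly_abs_le_1_iff)
  have feasible_top: "feasible p_top" and obj_top: "obj p_top = 2 * sin (real fc * \<alpha>)"
    using trig_coeffs_top_sine[OF assms(1)]
    by (simp_all add: feasible_iff obj_eq cos_sum_def sin_sum_delta abs_sin_le_one p_top_def)
  have upper: "obj q \<le> 2 * sin (real fc * \<alpha>)" if "feasible q" for q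
    using that unfolding feasible_iff obj_eq by (auto intro!: bounded_trig_sum_sin_sum_le[OF assms(1) \<alpha>])
  have unique: "p = p_top" if "feasible p" "obj p = 2 * sin (real fc * \<alpha>)" for p
    using that unfolding feasible_iff obj_eq p_top_def
    by (intro extremal_trig_coeffs_eq_top_sine[OF assms(1) \<alpha>]) auto
  show ?thesis unfolding p_top_def[symmetric]
  proof (intro equalityI subsetI)
    fix p assume "p \<in> {p. feasible p \<and> (\<forall>q. feasible q \<longrightarrow> obj q \<le> obj p)}"
    then have "feasible p" "obj p_top \<le> obj p" using feasible_top by blast+
    then show "p \<in> {p_top}" using unique upper obj_top by (simp add: order.antisym)
  qed (use feasible_top obj_top upper in simp)
qed

end
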